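(* There exist numerical constants $c_1,c_0'>0$ such that, in the Gaussian $G$-latent setting below, with probability at least $1-c_0'/p$, $$|\langle W_2,B^*-B\rangle|\le c_1\sqrt{\log p}\,|\Gamma|_\infty^{1/2}\sum_{j\neq k}|\mathbf{Z}_{:j}-\mathbf{Z}_{:k}|_2\,|B_{G_jG_k}|_1$$ simultaneously for all $B\in\mathcal{C}_0$, where $W_2$ is the $p\times p$ matrix with $(W_2)_{ab}=\langle\mathbf{E}_{:b}-\mathbf{E}_{:a},\ \mathbf{Z}_{:k(a)}-\mathbf{Z}_{:k(b)}\rangle$.
   Context: Setting: $G=\{G_1,\dots,G_K\}$ is a partition of $[p]$ into nonempty groups, $k(a)$ the index with $a\in G_{k(a)}$. $X$ satisfies $X_a=Z_{k(a)}+E_a$, with $Z\sim N(0,C)$ in $\mathbb{R}^K$ and $E\sim N(0,\Gamma)$ in $\mathbb{R}^p$ independent, $\Gamma$ diagonal with $\Gamma_{aa}=\gamma_{k(a)}>0$. $n$ i.i.d. copies $(Z^{(i)},E^{(i)})$ are stacked as rows of the $n\times K$ matrix $\mathbf{Z}$ and the $n\times p$ matrix $\mathbf{E}$; $M_{:a}$ denotes column $a$. $|M|_\infty$ is the largest absolute entry; $B_{G_jG_k}=(B_{ab})_{a\in G_j,b\in G_k}$ and $|M|_1$ is the sum of absolute entries. $B^*_{ab}=1/|G_k|$ if $a,b\in G_k$, else $0$. $\langle M,N\rangle=\mathrm{tr}(M^tN)$. $\mathcal{C}_0$ is the set of symmetric positive semidefinite $p\times p$ matrices $B$ with $\sum_aB_{ab}=1$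 for all $b$ and $B_{ab}\ge0$ for all $a,b$. *)

theory Defs
  imports "HOL-Probability.Probability"
begin

text \<open>Indices: variables a are in {..<p}, groups j in {..<K}, samples i in {..<n}.
  The partition G is encoded by the group-index map k (k a = index of the group of a).\<close>

definition is_partition_map :: "nat \<Rightarrow> nat \<Rightarrow> (nat \<Rightarrow> nat) \<Rightarrow> bool" where
  "is_partition_map p K k \<longleftrightarrow> (\<forall>a<p. k a < K) \<and> (\<forall>j<K. \<exists>a<p. k a = j)"

definition gaussian_vec :: "'w measure \<Rightarrow> 'i set \<Rightarrow> ('i \<Rightarrow> 'i \<Rightarrow> real) \<Rightarrow> ('w \<Rightarrow> 'i \<Rightarrow> real) \<Rightarrow> bool" where
  "gaussian_vec M I C X \<longleftrightarrow>
     (\<forall>j\<in>I. (\<lambda>w. X w j) \<in> borel_measurable M) \<and>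
     (\<forall>u::'i \<Rightarrow> real. (CLINT w|M. cis (\<Sum>j\<in>I. u j * X w j))
        = complex_of_real (exp (- (\<Sum>j\<in>I. \<Sum>l\<in>I. u j * C j l * u l) / 2)))"

text \<open>Matrix row i of the n x K matrix Z is (Z w i j)_j ; column j is (Z w i j)_i.\<close>
definition col_dist :: "nat \<Rightarrow> (nat \<Rightarrow> nat \<Rightarrow> real) \<Rightarrow> nat \<Rightarrow> nat \<Rightarrow> real" where
  "col_dist n Z j l = sqrt (\<Sum>i<n. (Z i j - Z i l)^2)"

definition W2 :: "nat \<Rightarrow> (nat \<Rightarrow> nat) \<Rightarrow> (nat \<Rightarrow> nat \<Rightarrow> real) \<Rightarrow> (nat \<Rightarrow> nat \<Rightarrow> real) \<Rightarrow> nat \<Rightarrow> nat \<Rightarrow> real" where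
  "W2 n k Z E a b = (\<Sum>i<n. (E i b - E i a) * (Z i (k a) - Z i (k b)))"

definition Bstar :: "nat \<Rightarrow> (nat \<Rightarrow> nat) \<Rightarrow> nat \<Rightarrow> nat \<Rightarrow> real" where
  "Bstar p k a b = (if k a = k b then 1 / real (card {c. c < p \<and> k c = k a}) else 0)"

definition frob_inner :: "nat \<Rightarrow> (nat \<Rightarrow> nat \<Rightarrow> real) \<Rightarrow> (nat \<Rightarrow> nat \<Rightarrow> real) \<Rightarrow> real" where
  "frob_inner p A B = (\<Sum>a<p. \<Sum>b<p. A a b * B a b)"

definition C0 :: "nat \<Rightarrow> (nat \<Rightarrow> nat \<Rightarrow> real) set" where
  "C0 p = {B. (\<forall>a<p. \<forall>b<p. B a b = B b a) \<and>
              (\<forall>v. 0 \<le> (\<Sum>a<p. \<Sum>b<p. v a * B a b * v b)) \<and>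
              (\<forall>b<p. (\<Sum>a<p. B a b) = 1) \<and>
              (\<forall>a<p. \<forall>b<p. 0 \<le> B a b)}"

definition block_l1 :: "nat \<Rightarrow> (nat \<Rightarrow> nat) \<Rightarrow> (nat \<Rightarrow> nat \<Rightarrow> real) \<Rightarrow> nat \<Rightarrow> nat \<Rightarrow> real" where
  "block_l1 p k B j l = (\<Sum>a\<in>{a. a < p \<and> k a = j}. \<Sum>b\<in>{b. b < p \<and> k b = l}. \<bar>B a b\<bar>)"

definition Gamma_sup :: "nat \<Rightarrow> (nat \<Rightarrow> nat) \<Rightarrow> (nat \<Rightarrow> real) \<Rightarrow> real" where
  "Gamma_sup p k \<gamma> = Max ((\<lambda>a. \<gamma> (k a)) ` {..<p})"

end

theory Submission
  imports Defs
begin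

text \<open>\<open>W\<^sub>2\<close> vanishes on the diagonal blocks \<open>k a = k b\<close> and \<open>B\<^sup>*\<close> vanishes off them, so
  \<open>\<langle>W\<^sub>2, B\<^sup>* - B\<rangle>\<close> only sees the off-diagonal entries of \<open>B \<ge> 0\<close>, and it suffices to show that
  with high probability \<open>\<bar>(W\<^sub>2)(a,b)\<bar> \<le> 8 sqrt (ln p) |\<Gamma>|\<^sub>\<infinity>\<^sup>1\<^sup>/\<^sup>2 |Z(:,k a) - Z(:,k b)|\<^sub>2\<close> for all
  pairs with \<open>k a \<noteq> k b\<close>. Conditionally on \<open>Z\<close>, \<open>(W\<^sub>2)(a,b)\<close> is a centred Gaussian of variance
  \<open>(\<gamma>(k a) + \<gamma>(k b)) |Z(:,k a) - Z(:,k b)|\<^sub>2\<^sup>2\<close>. Markov's inequality for the \<open>2m\<close>-th moment of a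
  standard normal, with \<open>m = \<lceil>3 ln p\<rceil>\<close>, bounds each exceptional event by \<open>p\<^sup>-\<^sup>3\<close>, and a union
  bound over the at most \<open>p\<^sup>2\<close> pairs concludes.\<close>

lemma fact_double_div_le: "fact (2*k) / (2^k * fact k) \<le> (2 * real k) ^ k"
proof -
  have dvd: "fact k dvd (fact (2*k) :: nat)" by (rule fact_dvd) simp
  have "fact (2*k) div fact (2*k - k) \<le> (2*k) ^ k" by (rule fact_div_fact_le_pow) simp
  then have "fact (2*k) div fact k \<le> (2*k) ^ k" by simp
  then have "real (fact (2*k) div fact k) \<le> real ((2*k)^k)" by linarith
  then have "fact (2*k) / fact k \<le> (2*real k)^k"
    using dvd by (simp add: real_of_nat_div of_nat_fact)
  moreover have "fact (2*k) / (2^k * fact k) \<le> fact (2*k) / (fact k :: real)"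
    by (intro divide_left_mono) (auto simp: fact_gt_zero)
  ultimately show ?thesis by linarith
qed

lemma std_normal_tail_moment_bound:
  fixes x :: real assumes "x > 0"
  shows "measure std_normal_distribution {y. x \<le> \<bar>y\<bar>} \<le> (2 * real k) ^ k / x^(2*k)"
proof -
  interpret N: prob_space std_normal_distribution
    using real_dist_normal_dist by (simp add: real_distribution_def)
  have space: "space std_normal_distribution = UNIV" by simp
  have integrable: "integrable std_normal_distribution (\<lambda>y. \<bar>y\<bar>^(2*k))"
    using std_normal_distribution_even_moments(2)[of k] by (simp add: power_even_abs)
  have "measure std_normal_distribution {y. x \<le> \<bar>y\<bar>}
      \<le> measure std_normal_distribution {y \<in> space std_normal_distribution. \<bar>y\<bar>^(2*k) \<ge> x^(2*k)}"
    using assms by (intro N.finite_measure_mono) (auto intro!: power_mono simp: space)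
  also have "\<dots> \<le> (\<integral>y. \<bar>y\<bar>^(2*k) \<partial>std_normal_distribution) / x^(2*k)"
    by (rule integral_Markov_inequality_measure[where A = UNIV, OF integrable])
      (use assms in \<open>auto simp: space\<close>)
  also have "\<dots> = fact (2*k) / (2^k * fact k) / x^(2*k)"
    by (simp add: std_normal_distribution_even_moments_abs)
  also have "\<dots> \<le> (2 * real k) ^ k / x^(2*k)"
    using assms by (intro divide_right_mono fact_double_div_le) auto
  finally show ?thesis .
qed

lemma std_normal_tail_log:
  assumes p: "p \<ge> 4"
  shows "measure std_normal_distribution {y. sqrt (32 * ln (real p)) \<le> \<bar>y\<bar>} \<le> 1 / real p ^ 3"
proof -
  define L where "L = ln (real p)"
  define k where "k = nat \<lceil>3 * L\<rceil>"
  have "exp 1 < real p" using p exp_le by linarith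
  then have "ln (exp 1) < L" unfolding L_def using p by (subst ln_less_cancel_iff) auto
  then have L1: "L > 1" by simp
  have "real k = of_int \<lceil>3 * L\<rceil>" unfolding k_def using L1 by simp
  then have k_lower: "3 * L \<le> real k" and k_upper: "real k \<le> 4 * L"
    using le_of_int_ceiling[of "3 * L"] of_int_ceiling_le_add_one[of "3 * L"] L1 by linarith+
  have p_cube: "real p ^ 3 \<le> 4 ^ k"
  proof -
    have "real p ^ 3 = exp L ^ 3" unfolding L_def using p by simp
    also have "\<dots> = exp (real 3 * L)" by (rule exp_of_nat_mult[symmetric])
    also have "\<dots> \<le> exp (real k * 1)" using k_lower by simp
    also have "\<dots> = exp 1 ^ k" by (rule exp_of_nat_mult)
    also have "\<dots> \<le> 4 ^ k" using exp_le by (intro power_mono) auto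
    finally show ?thesis .
  qed
  have "sqrt (32 * L) ^ 2 = 32 * L" using L1 by simp
  then have sqrt_pow: "sqrt (32 * L) ^ (2 * k) = (32 * L) ^ k" by (simp only: power_mult)
  have "measure std_normal_distribution {y. sqrt (32 * L) \<le> \<bar>y\<bar>}
      \<le> (2 * real k) ^ k / sqrt (32 * L) ^ (2 * k)"
    by (rule std_normal_tail_moment_bound) (use L1 in simp)
  also have "\<dots> = (2 * real k) ^ k / (32 * L) ^ k" by (simp only: sqrt_pow)
  also have "\<dots> = (2 * real k / (32 * L)) ^ k"
    by (rule power_divide[symmetric])
  also have "\<dots> \<le> (1 / 4) ^ k"
  proof (rule power_mono)
    show "2 * real k / (32 * L) \<le> 1 / 4"
      using k_upper L1 by (subst pos_divide_le_eq) simp_all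
  qed (use L1 in simp)
  also have "\<dots> = 1 / 4 ^ k" by (rule power_one_over)
  also have "\<dots> \<le> 1 / real p ^ 3"
    by (rule divide_left_mono[OF p_cube]) (use p in simp_all)
  finally show ?thesis unfolding L_def .
qed

lemma (in prob_space) distr_sum_indep_std_normal:
  assumes fin: "finite I" and ind: "indep_vars (\<lambda>_. borel) X I"
    and ch: "\<And>i t. i \<in> I \<Longrightarrow> (CLINT w|M. iexp (t * X i w)) = complex_of_real (exp (- (t^2 * v i) / 2))"
    and v1: "(\<Sum>i\<in>I. v i) = 1"
  shows "distr M borel (\<lambda>w. \<Sum>i\<in>I. X i w) = std_normal_distribution"
proof (rule Levy_uniqueness)
  have rv: "\<And>i. i \<in> I \<Longrightarrow> random_variable borel (X i)"
    using ind unfolding indep_vars_def by auto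
  then have "random_variable borel (\<lambda>w. \<Sum>i\<in>I. X i w)" by auto
  then show "real_distribution (distr M borel (\<lambda>w. \<Sum>i\<in>I. X i w))"
    by (simp add: real_distribution_distr)
  show "real_distribution std_normal_distribution" by (rule real_dist_normal_dist)
  show "char (distr M borel (\<lambda>w. \<Sum>i\<in>I. X i w)) = char std_normal_distribution"
  proof
    fix t
    have "char (distr M borel (\<lambda>w. \<Sum>i\<in>I. X i w)) t = (\<Prod>i\<in>I. char (distr M borel (X i)) t)"
      by (rule char_distr_sum[OF ind])
    also have "\<dots> = (\<Prod>i\<in>I. complex_of_real (exp (- (t^2 * v i) / 2)))"
      using ch by (intro prod.cong refl) (simp add: char_def integral_distr rv)
    also have "\<dots> = complex_of_real (exp (\<Sum>i\<in>I. - (t^2 * v i) / 2))"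
      by (simp add: exp_sum fin)
    also have "(\<Sum>i\<in>I. - (t^2 * v i) / 2) = - (t^2 * (\<Sum>i\<in>I. v i)) / 2"
      by (simp add: sum_distrib_left sum_divide_distrib sum_negf)
    also have "\<dots> = - (t^2) / 2" using v1 by simp
    finally show "char (distr M borel (\<lambda>w. \<Sum>i\<in>I. X i w)) t = char std_normal_distribution t"
      by (simp add: char_std_normal_distribution)
  qed
qed

lemma (in prob_space) gaussian_vec_diag_char_contrast:
  fixes p :: nat
  assumes G: "gaussian_vec M {..<p} (\<lambda>a b. if a = b then g a else 0) F"
    and ab: "a < p" "b < p" "a \<noteq> b"
  shows "(CLINT w|M. iexp (\<tau> * ((F w b - F w a) * d)))
       = complex_of_real (exp (- (\<tau>^2 * (d^2 * (g a + g b))) / 2))"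
proof -
  define u where "u j = \<tau> * d * (of_bool (j = b) - of_bool (j = a))" for j
  have "u j * F w j = \<tau> * d * ((if j = b then F w j else 0) - (if j = a then F w j else 0))" for j w
    by (simp add: u_def algebra_simps)
  then have lin: "(\<Sum>j<p. u j * F w j) = \<tau> * ((F w b - F w a) * d)" for w
    using ab by (simp add: sum_subtractf flip: sum_distrib_left)
  have "(\<Sum>l<p. u j * (if j = l then g j else 0) * u l) = u j * g j * u j" if "j < p" for j
    using that by (simp add: if_distrib if_distribR cong: if_cong)
  moreover have "u j * g j * u j
      = (\<tau>^2 * d^2) * ((if j = a then g j else 0) + (if j = b then g j else 0))" for j
    using ab by (simp add: u_def power2_eq_square)
  ultimately have quad: "(\<Sum>j<p. \<Sum>l<p. u j * (if j = l then g j else 0) * u l)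
      = \<tau>^2 * (d^2 * (g a + g b))"
    using ab by (simp add: sum.distrib flip: sum_distrib_left)
  have "(CLINT w|M. cis (\<Sum>j<p. u j * F w j))
      = complex_of_real (exp (- (\<Sum>j<p. \<Sum>l<p. u j * (if j = l then g j else 0) * u l) / 2))"
    using G unfolding gaussian_vec_def by blast
  then show ?thesis unfolding lin quad by (simp add: cis_conv_exp)
qed

lemma (in prob_space) gaussian_contrast_tail:
  fixes F :: "'t \<Rightarrow> 'a \<Rightarrow> nat \<Rightarrow> real" and p :: nat and c :: "'t \<Rightarrow> real"
  assumes fin: "finite J"
    and ind: "indep_vars (\<lambda>_. PiM {..<p} (\<lambda>_. borel)) (\<lambda>t w. restrict (F t w) {..<p}) J"
    and G: "\<And>t. t \<in> J \<Longrightarrow> gaussian_vec M {..<p} (\<lambda>a b. if a = b then g a else 0) (F t)"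
    and ab: "a < p" "b < p" "a \<noteq> b" and g_pos: "g a > 0" "g b > 0"
    and x: "x > 0" and \<tau>: "x * sqrt (g a + g b) \<le> \<tau>"
  shows "measure M {w\<in>space M. \<tau> * sqrt (\<Sum>t\<in>J. (c t)^2) < \<bar>\<Sum>t\<in>J. (F t w b - F t w a) * c t\<bar>}
     \<le> measure std_normal_distribution {y. x \<le> \<bar>y\<bar>}"
proof (cases "(\<Sum>t\<in>J. (c t)^2) = 0")
  case True
  then have "\<forall>t\<in>J. c t = 0" using fin by (simp add: sum_nonneg_eq_0_iff)
  then show ?thesis using True by simp
next
  case False
  define S where "S = (\<Sum>t\<in>J. (c t)^2)"
  have S_pos: "S > 0" using False unfolding S_def by (metis sum_nonneg zero_le_power2 order_le_less)
  define s where "s = sqrt (g a + g b) * sqrt S"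
  have s_pos: "s > 0" unfolding s_def using S_pos g_pos by auto
  define X where "X t w = (F t w b - F t w a) * (c t / s)" for t w
  define v where "v t = (c t / s)^2 * (g a + g b)" for t
  have indX: "indep_vars (\<lambda>_. borel) X J"
  proof -
    have "indep_vars (\<lambda>_. borel) (\<lambda>t w. (\<lambda>f. (f b - f a) * (c t / s)) (restrict (F t w) {..<p})) J"
      by (rule indep_vars_compose2[OF ind]) (use ab in auto)
    then show ?thesis unfolding X_def using ab by simp
  qed
  have chX: "(CLINT w|M. iexp (u * X t w)) = complex_of_real (exp (- (u^2 * v t) / 2))" if "t \<in> J" for t u
    unfolding X_def v_def by (rule gaussian_vec_diag_char_contrast[OF G[OF that] ab])
  have "(\<Sum>t\<in>J. v t) = S * (g a + g b) / s^2"
    unfolding v_def S_def by (simp add: sum_distrib_right sum_divide_distrib power_divide)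
  also have "s^2 = (g a + g b) * S" unfolding s_def using g_pos S_pos by (simp add: power_mult_distrib)
  finally have v_sum: "(\<Sum>t\<in>J. v t) = 1" using g_pos S_pos by simp
  have std: "distr M borel (\<lambda>w. \<Sum>t\<in>J. X t w) = std_normal_distribution"
    by (rule distr_sum_indep_std_normal[OF fin indX chX v_sum])
  have rv: "random_variable borel (\<lambda>w. \<Sum>t\<in>J. X t w)"
    using indX unfolding indep_vars_def by (intro borel_measurable_sum) auto
  have "x \<le> \<bar>\<Sum>t\<in>J. X t w\<bar>" if "\<tau> * sqrt S < \<bar>\<Sum>t\<in>J. (F t w b - F t w a) * c t\<bar>" for w
  proof -
    have "x * s \<le> \<tau> * sqrt S" unfolding s_def using \<tau> S_pos by (simp add: mult.assoc[symmetric] mult_right_mono)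
    then have "x < \<bar>\<Sum>t\<in>J. (F t w b - F t w a) * c t\<bar> / s"
      using that s_pos by (simp add: pos_less_divide_eq mult.commute)
    moreover have "(\<Sum>t\<in>J. X t w) = (\<Sum>t\<in>J. (F t w b - F t w a) * c t) / s"
      unfolding X_def by (simp add: sum_divide_distrib)
    ultimately show ?thesis using s_pos by (simp add: abs_divide)
  qed
  then have "measure M {w\<in>space M. \<tau> * sqrt S < \<bar>\<Sum>t\<in>J. (F t w b - F t w a) * c t\<bar>}
     \<le> measure M ((\<lambda>w. \<Sum>t\<in>J. X t w) -` {y. x \<le> \<bar>y\<bar>} \<inter> space M)"
    using rv by (intro finite_measure_mono) (auto intro!: measurable_sets)
  also have "\<dots> = measure std_normal_distribution {y. x \<le> \<bar>y\<bar>}"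
    using rv by (simp add: measure_distr flip: std)
  finally show ?thesis unfolding S_def .
qed

lemma (in prob_space) nn_integral_indep_pair_le:
  assumes ind: "indep_var N1 X N2 Y" and Gm: "G \<in> borel_measurable (N1 \<Otimes>\<^sub>M N2)"
    and inner: "\<And>z. z \<in> space N1 \<Longrightarrow> (\<integral>\<^sup>+ w. G (z, Y w) \<partial>M) \<le> ennreal \<delta>"
  shows "(\<integral>\<^sup>+ w. G (X w, Y w) \<partial>M) \<le> ennreal \<delta>"
proof -
  have rvX[measurable]: "X \<in> measurable M N1" and rvY[measurable]: "Y \<in> measurable M N2"
    using ind by (blast dest: indep_var_rv1 indep_var_rv2)+
  have eq: "distr M N1 X \<Otimes>\<^sub>M distr M N2 Y = distr M (N1 \<Otimes>\<^sub>M N2) (\<lambda>x. (X x, Y x))"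
    using ind by (simp add: indep_var_distribution_eq)
  interpret PY: prob_space "distr M N2 Y" by (rule prob_space_distr) simp
  interpret PX: prob_space "distr M N1 X" by (rule prob_space_distr) simp
  have Gm': "G \<in> borel_measurable (distr M N1 X \<Otimes>\<^sub>M distr M N2 Y)"
    using Gm by (simp add: measurable_cong_sets[OF sets_pair_measure_cong[OF sets_distr sets_distr] refl])
  have "(\<integral>\<^sup>+ w. G (X w, Y w) \<partial>M) = integral\<^sup>N (distr M (N1 \<Otimes>\<^sub>M N2) (\<lambda>x. (X x, Y x))) G"
    using Gm by (subst nn_integral_distr) auto
  also have "\<dots> = integral\<^sup>N (distr M N1 X \<Otimes>\<^sub>M distr M N2 Y) G" by (simp add: eq)
  also have "\<dots> = (\<integral>\<^sup>+ z. \<integral>\<^sup>+ e. G (z, e) \<partial>distr M N2 Y \<partial>distr M N1 X)"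
    by (rule PY.nn_integral_fst[symmetric, OF Gm'])
  also have "\<dots> \<le> (\<integral>\<^sup>+ z. ennreal \<delta> \<partial>distr M N1 X)"
  proof (rule nn_integral_mono)
    fix z assume "z \<in> space (distr M N1 X)"
    then have z: "z \<in> space N1" by simp
    have "(\<lambda>e. G (z, e)) \<in> borel_measurable N2" by (rule measurable_Pair2[OF Gm z])
    then have "(\<integral>\<^sup>+ e. G (z, e) \<partial>distr M N2 Y) = (\<integral>\<^sup>+ w. G (z, Y w) \<partial>M)"
      by (subst nn_integral_distr) auto
    also have "\<dots> \<le> ennreal \<delta>" by (rule inner[OF z])
    finally show "(\<integral>\<^sup>+ e. G (z, e) \<partial>distr M N2 Y) \<le> ennreal \<delta>" .
  qed
  also have "\<dots> = ennreal \<delta>" using PX.emeasure_space_1 by simp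
  finally show ?thesis .
qed

lemma measurable_PiM_component_apply:
  fixes M' :: "'t \<Rightarrow> (nat \<Rightarrow> real) measure"
  assumes MS: "\<forall>t\<in>I. M' t = PiM S (\<lambda>_. borel)"
  shows "(\<lambda>z. z t j) \<in> borel_measurable (PiM I M')"
proof (cases "t \<in> I")
  case True
  have M'_t: "M' t = PiM S (\<lambda>_. borel)" using MS True by blast
  have proj: "(\<lambda>z. z t) \<in> measurable (PiM I M') (PiM S (\<lambda>_. borel))"
    by (subst M'_t[symmetric]) (rule measurable_component_singleton[OF True])
  show ?thesis
  proof (cases "j \<in> S")
    case True
    then have "(\<lambda>f. f j) \<in> borel_measurable (PiM S (\<lambda>_. borel :: real measure))"
      by (rule measurable_component_singleton)
    then show ?thesis using measurable_compose[OF proj] by blast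
  next
    case False
    have undef: "z t j = undefined" if z: "z \<in> space (PiM I M')" for z
    proof -
      have "z t \<in> space (PiM S (\<lambda>_. borel :: real measure))"
        by (rule measurable_space[OF proj z])
      then have "z t \<in> PiE S (\<lambda>_. space (borel :: real measure))" by (simp only: space_PiM)
      then show "z t j = undefined" using False by (rule PiE_arb)
    qed
    have "(\<lambda>z. undefined) \<in> borel_measurable (PiM I M')" by (rule borel_measurable_const)
    then show ?thesis using measurable_cong[of "PiM I M'" "\<lambda>z. z t j" "\<lambda>z. undefined" borel] undef by blast
  qed
next
  case False
  have undef: "z t j = undefined j" if z: "z \<in> space (PiM I M')" for z
  proof -
    have "z \<in> PiE I (\<lambda>i. space (M' i))" using z by (simp only: space_PiM)
    then have "z t = undefined" using False by (rule PiE_arb)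
    then show ?thesis by simp
  qed
  have "(\<lambda>z. undefined j) \<in> borel_measurable (PiM I M')" by (rule borel_measurable_const)
  then show ?thesis using measurable_cong[of "PiM I M'" "\<lambda>z. z t j" "\<lambda>z. undefined j" borel] undef by blast
qed

lemma sum_group_blocks:
  fixes h :: "nat \<Rightarrow> nat \<Rightarrow> 'a::comm_monoid_add" and k :: "nat \<Rightarrow> nat"
  assumes k_less: "\<And>a. a < p \<Longrightarrow> k a < K"
  shows "(\<Sum>a<p. \<Sum>b<p. h a b)
       = (\<Sum>j<K. \<Sum>l<K. \<Sum>a\<in>{a. a < p \<and> k a = j}. \<Sum>b\<in>{b. b < p \<and> k b = l}. h a b)"
proof -
  have im: "k ` {..<p} \<subseteq> {..<K}" using k_less by auto
  have group: "(\<Sum>a<p. f a) = (\<Sum>j<K. \<Sum>a\<in>{a. a < p \<and> k a = j}. f a)" for f :: "nat \<Rightarrow> 'a"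
    using sum.group[OF finite_lessThan[of p] finite_lessThan[of K] im, of f] by (simp add: lessThan_def)
  have "(\<Sum>a<p. \<Sum>b<p. h a b) = (\<Sum>j<K. \<Sum>a\<in>{a. a < p \<and> k a = j}. \<Sum>l<K. \<Sum>b\<in>{b. b < p \<and> k b = l}. h a b)"
    by (simp add: group[of "h _"] group[of "\<lambda>a. \<Sum>l<K. \<Sum>b\<in>{b. b < p \<and> k b = l}. h a b"])
  also have "\<dots> = (\<Sum>j<K. \<Sum>l<K. \<Sum>a\<in>{a. a < p \<and> k a = j}. \<Sum>b\<in>{b. b < p \<and> k b = l}. h a b)"
    by (intro sum.cong refl sum.swap)
  finally show ?thesis .
qed

lemma frob_inner_Bstar_diff_le:
  fixes W B d :: "nat \<Rightarrow> nat \<Rightarrow> real"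
  assumes k_less: "\<And>a. a < p \<Longrightarrow> k a < K"
    and W_diag: "\<And>a b. a < p \<Longrightarrow> b < p \<Longrightarrow> k a = k b \<Longrightarrow> W a b = 0"
    and W_off: "\<And>a b. a < p \<Longrightarrow> b < p \<Longrightarrow> k a \<noteq> k b \<Longrightarrow> \<bar>W a b\<bar> \<le> T * d (k a) (k b)"
    and B_nonneg: "\<And>a b. a < p \<Longrightarrow> b < p \<Longrightarrow> 0 \<le> B a b"
  shows "\<bar>frob_inner p W (\<lambda>a b. Bstar p k a b - B a b)\<bar>
     \<le> T * (\<Sum>j<K. \<Sum>l\<in>{..<K} - {j}. d j l * block_l1 p k B j l)"
proof -
  define h where "h a b = (if k a = k b then 0 else T * d (k a) (k b) * \<bar>B a b\<bar>)" for a b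
  have "\<bar>W a b * (Bstar p k a b - B a b)\<bar> \<le> h a b" if "a < p" "b < p" for a b
  proof (cases "k a = k b")
    case False
    then have "\<bar>W a b * (Bstar p k a b - B a b)\<bar> = \<bar>W a b\<bar> * \<bar>B a b\<bar>"
      by (simp add: Bstar_def abs_mult)
    also have "\<dots> \<le> T * d (k a) (k b) * \<bar>B a b\<bar>"
      using W_off[OF that False] by (intro mult_right_mono) auto
    finally show ?thesis using False by (simp add: h_def)
  qed (simp add: W_diag that h_def)
  then have "\<bar>frob_inner p W (\<lambda>a b. Bstar p k a b - B a b)\<bar> \<le> (\<Sum>a<p. \<Sum>b<p. h a b)"
    unfolding frob_inner_def
    by (intro order.trans[OF sum_abs sum_mono] order.trans[OF sum_abs sum_mono]) auto
  also have "\<dots> = (\<Sum>j<K. \<Sum>l<K. \<Sum>a\<in>{a. a < p \<and> k a = j}. \<Sum>b\<in>{b. b < p \<and> k b = l}. h a b)"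
    by (rule sum_group_blocks[OF k_less])
  also have "\<dots> = (\<Sum>j<K. \<Sum>l<K. if j = l then 0 else T * (d j l * block_l1 p k B j l))"
    by (intro sum.cong refl) (auto simp: h_def block_l1_def sum_distrib_left mult.assoc)
  also have "\<dots> = T * (\<Sum>j<K. \<Sum>l\<in>{..<K} - {j}. d j l * block_l1 p k B j l)"
    by (simp add: sum.If_cases Diff_eq sum_distrib_left Int_commute)
  finally show ?thesis .
qed

lemma sqrt_scaled_sum_le:
  fixes L u v \<Gamma> :: real
  assumes "0 \<le> L" "u \<le> \<Gamma>" "v \<le> \<Gamma>"
  shows "sqrt (32 * L) * sqrt (u + v) \<le> 8 * sqrt L * sqrt \<Gamma>"
proof -
  have "sqrt (32 * L) * sqrt (u + v) = sqrt (32 * L * (u + v))" by (simp add: real_sqrt_mult)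
  also have "\<dots> \<le> sqrt (64 * L * \<Gamma>)"
    using mult_left_mono[of "u + v" "2 * \<Gamma>" L] assms by (intro real_sqrt_le_mono) simp
  also have "\<dots> = 8 * sqrt L * sqrt \<Gamma>"
    by (simp add: real_sqrt_mult real_sqrt_eq_iff[symmetric] flip: real_sqrt_pow2)
  finally show ?thesis .
qed

lemma (in finite_measure) measure_UN_le_card_mult:
  assumes "finite I" "\<And>i. i \<in> I \<Longrightarrow> A i \<in> sets M" "\<And>i. i \<in> I \<Longrightarrow> measure M (A i) \<le> \<delta>"
  shows "measure M (\<Union>i\<in>I. A i) \<le> real (card I) * \<delta>"
proof -
  have "measure M (\<Union>i\<in>I. A i) \<le> (\<Sum>i\<in>I. measure M (A i))"
    using assms(1,2) by (intro finite_measure_subadditive_finite) auto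
  also have "\<dots> \<le> real (card I) * \<delta>" using assms(3) by (rule sum_bounded_above)
  finally show ?thesis .
qed

lemma gamma_le_Gamma_sup: "a < p \<Longrightarrow> \<gamma> (k a) \<le> Gamma_sup p k \<gamma>"
  unfolding Gamma_sup_def by (auto intro!: Max_ge)

definition latent_row_space :: "nat \<Rightarrow> nat \<Rightarrow> nat + nat \<Rightarrow> (nat \<Rightarrow> real) measure" where
  "latent_row_space K p =
     (\<lambda>t. case t of Inl i \<Rightarrow> PiM {..<K} (\<lambda>_. borel) | Inr i \<Rightarrow> PiM {..<p} (\<lambda>_. borel))"

definition latent_row ::
    "nat \<Rightarrow> nat \<Rightarrow> ('w \<Rightarrow> nat \<Rightarrow> nat \<Rightarrow> real) \<Rightarrow> ('w \<Rightarrow> nat \<Rightarrow> nat \<Rightarrow> real) \<Rightarrow> nat + nat \<Rightarrow> 'w \<Rightarrow> nat \<Rightarrow> real"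
  where
  "latent_row K p Z E =
     (\<lambda>t w. case t of Inl i \<Rightarrow> (\<lambda>j\<in>{..<K}. Z w i j) | Inr i \<Rightarrow> (\<lambda>a\<in>{..<p}. E w i a))"

text \<open>The law of \<open>Z\<close> is deliberately not part of the model: everything below holds conditionally
  on \<open>Z\<close>.\<close>

locale latent_noise_model = prob_space M
  for M :: "'w measure" and p K n :: nat and k :: "nat \<Rightarrow> nat" and \<gamma> :: "nat \<Rightarrow> real"
    and Z E :: "'w \<Rightarrow> nat \<Rightarrow> nat \<Rightarrow> real" +
  assumes k_less: "a < p \<Longrightarrow> k a < K"
    and \<gamma>_pos: "j < K \<Longrightarrow> 0 < \<gamma> j"
    and gaussian_E: "i < n \<Longrightarrow> gaussian_vec M {..<p} (\<lambda>a b. if a = b then \<gamma> (k a) else 0) (\<lambda>w. E w i)"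
    and indep_rows: "indep_vars (latent_row_space K p) (latent_row K p Z E) (Inl ` {..<n} \<union> Inr ` {..<n})"
begin

abbreviation Zspace where "Zspace \<equiv> PiM (Inl ` {..<n}) (latent_row_space K p)"
abbreviation Espace where "Espace \<equiv> PiM (Inr ` {..<n}) (latent_row_space K p)"

definition Zblock where "Zblock w = restrict (\<lambda>t. latent_row K p Z E t w) (Inl ` {..<n})"
definition Eblock where "Eblock w = restrict (\<lambda>t. latent_row K p Z E t w) (Inr ` {..<n})"

lemma indep_Zblock_Eblock: "indep_var Zspace Zblock Espace Eblock"
  unfolding Zblock_def Eblock_def by (rule indep_var_restrict[OF indep_rows]) auto

lemma Zblock_apply: "i < n \<Longrightarrow> j < K \<Longrightarrow> Zblock w (Inl i) j = Z w i j"
  by (simp add: Zblock_def latent_row_def)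

lemma Eblock_apply: "i < n \<Longrightarrow> a < p \<Longrightarrow> Eblock w (Inr i) a = E w i a"
  by (simp add: Eblock_def latent_row_def)

lemma measurable_block_pair_apply [measurable]:
  "(\<lambda>ze. fst ze t j) \<in> borel_measurable (Zspace \<Otimes>\<^sub>M Espace)"
  "(\<lambda>ze. snd ze t j) \<in> borel_measurable (Zspace \<Otimes>\<^sub>M Espace)"
  by (auto intro!: measurable_compose[OF measurable_fst] measurable_compose[OF measurable_snd]
      measurable_PiM_component_apply simp: latent_row_space_def)

lemma indep_E_rows:
  "indep_vars (\<lambda>_. PiM {..<p} (\<lambda>_. borel)) (\<lambda>t w. restrict (E w (projr t)) {..<p})
     (Inr ` {..<n} :: (nat + nat) set)"
proof -
  have "indep_vars (latent_row_space K p) (latent_row K p Z E) (Inr ` {..<n})"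
    by (rule indep_vars_subset[OF indep_rows]) auto
  moreover have "indep_vars (latent_row_space K p) (latent_row K p Z E) (Inr ` {..<n})
      \<longleftrightarrow> indep_vars (\<lambda>_. PiM {..<p} (\<lambda>_. borel)) (\<lambda>t w. restrict (E w (projr t)) {..<p})
            (Inr ` {..<n} :: (nat + nat) set)"
    by (rule indep_vars_cong) (auto simp: latent_row_space_def latent_row_def restrict_def intro!: ext)
  ultimately show ?thesis by blast
qed

lemma noise_contrast_tail:
  fixes c :: "nat \<Rightarrow> real"
  assumes p: "p \<ge> 4" and ab: "a < p" "b < p" "k a \<noteq> k b"
  shows "measure M {w\<in>space M. 8 * sqrt (ln (real p)) * sqrt (Gamma_sup p k \<gamma>) * sqrt (\<Sum>i<n. (c i)^2)
           < \<bar>\<Sum>i<n. (E w i b - E w i a) * c i\<bar>} \<le> 1 / real p ^ 3"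
proof -
  define x where "x = sqrt (32 * ln (real p))"
  define J where "J = (Inr ` {..<n} :: (nat + nat) set)"
  define F where "F t = (\<lambda>w. E w (projr t))" for t :: "nat + nat"
  have g_pos: "\<gamma> (k a) > 0" "\<gamma> (k b) > 0" using ab k_less \<gamma>_pos by auto
  have x_pos: "x > 0" unfolding x_def using p by simp
  have threshold: "x * sqrt (\<gamma> (k a) + \<gamma> (k b)) \<le> 8 * sqrt (ln (real p)) * sqrt (Gamma_sup p k \<gamma>)"
    unfolding x_def using p ab by (intro sqrt_scaled_sum_le gamma_le_Gamma_sup) simp_all
  have gaussian_F: "gaussian_vec M {..<p} (\<lambda>a b. if a = b then \<gamma> (k a) else 0) (F t)"
    if "t \<in> J" for t
    using that gaussian_E by (auto simp: F_def J_def)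
  have indF: "indep_vars (\<lambda>_. PiM {..<p} (\<lambda>_. borel)) (\<lambda>t w. restrict (F t w) {..<p}) J"
    using indep_E_rows by (simp add: F_def J_def)
  have a_neq_b: "a \<noteq> b" using ab by auto
  have "measure M {w\<in>space M. 8 * sqrt (ln (real p)) * sqrt (Gamma_sup p k \<gamma>) * sqrt (\<Sum>t\<in>J. (c (projr t))^2)
           < \<bar>\<Sum>t\<in>J. (F t w b - F t w a) * c (projr t)\<bar>}
     \<le> measure std_normal_distribution {y. x \<le> \<bar>y\<bar>}"
    by (rule gaussian_contrast_tail[where c = "\<lambda>t. c (projr t)",
          OF _ indF gaussian_F ab(1,2) a_neq_b g_pos x_pos threshold])
      (simp add: J_def)
  also have "\<dots> \<le> 1 / real p ^ 3" unfolding x_def by (rule std_normal_tail_log[OF p])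
  finally show ?thesis by (simp add: F_def J_def sum.reindex)
qed

lemma W2_entry_tail:
  assumes p: "p \<ge> 4" and ab: "a < p" "b < p" "k a \<noteq> k b"
  defines "Bad \<equiv> {w\<in>space M. 8 * sqrt (ln (real p)) * sqrt (Gamma_sup p k \<gamma>) * col_dist n (Z w) (k a) (k b)
                    < \<bar>W2 n k (Z w) (E w) a b\<bar>}"
  shows "Bad \<in> sets M" and "measure M Bad \<le> 1 / real p ^ 3"
proof -
  define T where "T = 8 * sqrt (ln (real p)) * sqrt (Gamma_sup p k \<gamma>)"
  text \<open>\<open>G\<close> is the indicator of \<open>Bad\<close> as a function of the two independent blocks; for each
    fixed value of the \<open>Z\<close>-block it is a tail event of the noise alone.\<close>
  define G :: "(nat + nat \<Rightarrow> nat \<Rightarrow> real) \<times> (nat + nat \<Rightarrow> nat \<Rightarrow> real) \<Rightarrow> ennreal" where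
    "G ze = (if T * sqrt (\<Sum>i<n. (fst ze (Inl i) (k a) - fst ze (Inl i) (k b))^2)
        < \<bar>\<Sum>i<n. (snd ze (Inr i) b - snd ze (Inr i) a) * (fst ze (Inl i) (k a) - fst ze (Inl i) (k b))\<bar>
        then 1 else 0)" for ze
  have G_measurable: "G \<in> borel_measurable (Zspace \<Otimes>\<^sub>M Espace)" unfolding G_def by measurable
  have Zblock_rv: "Zblock \<in> measurable M Zspace" and Eblock_rv: "Eblock \<in> measurable M Espace"
    using indep_Zblock_Eblock by (blast dest: indep_var_rv1 indep_var_rv2)+
  have G_blocks: "G (Zblock w, Eblock w) = indicator Bad w" if "w \<in> space M" for w
    using that ab k_less
    by (simp add: G_def Bad_def T_def indicator_def col_dist_def W2_def Zblock_apply Eblock_apply)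
  have "(\<lambda>w. G (Zblock w, Eblock w)) \<in> borel_measurable M"
    using Zblock_rv Eblock_rv G_measurable by measurable
  moreover have "Bad = (\<lambda>w. G (Zblock w, Eblock w)) -` {1} \<inter> space M"
    using G_blocks by (auto simp: indicator_def Bad_def)
  ultimately show Bad_sets: "Bad \<in> sets M" by (simp add: measurable_sets)
  have conditional: "(\<integral>\<^sup>+ w. G (z, Eblock w) \<partial>M) \<le> ennreal (1 / real p ^ 3)"
    if z: "z \<in> space Zspace" for z
  proof -
    define c where "c i = z (Inl i) (k a) - z (Inl i) (k b)" for i
    define S where "S = {w\<in>space M. T * sqrt (\<Sum>i<n. (c i)^2) < \<bar>\<Sum>i<n. (E w i b - E w i a) * c i\<bar>}"
    have G_z: "G (z, Eblock w) = indicator S w" if "w \<in> space M" for w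
      using that ab by (simp add: G_def S_def c_def indicator_def Eblock_apply)
    have "(\<lambda>w. G (z, Eblock w)) \<in> borel_measurable M"
      by (rule measurable_compose[OF Eblock_rv measurable_Pair2[OF G_measurable z]])
    moreover have "S = (\<lambda>w. G (z, Eblock w)) -` {1} \<inter> space M"
      using G_z by (auto simp: indicator_def S_def)
    ultimately have S_sets: "S \<in> sets M" by (simp add: measurable_sets)
    have "(\<integral>\<^sup>+ w. G (z, Eblock w) \<partial>M) = emeasure M S"
      using S_sets by (simp add: G_z cong: nn_integral_cong)
    also have "\<dots> \<le> ennreal (1 / real p ^ 3)"
      using noise_contrast_tail[OF p ab, of c]
      by (simp add: emeasure_eq_measure S_def T_def ennreal_leI)
    finally show ?thesis .
  qed
  have "emeasure M Bad = (\<integral>\<^sup>+ w. G (Zblock w, Eblock w) \<partial>M)"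
    using Bad_sets by (simp add: G_blocks cong: nn_integral_cong)
  also have "\<dots> \<le> ennreal (1 / real p ^ 3)"
    by (rule nn_integral_indep_pair_le[OF indep_Zblock_Eblock G_measurable conditional])
  finally show "measure M Bad \<le> 1 / real p ^ 3"
    by (simp add: emeasure_eq_measure ennreal_le_iff)
qed

lemma W2_bound_whp:
  assumes p: "p \<ge> 4"
  shows "\<exists>A\<in>sets M. 1 - 1 / real p \<le> measure M A \<and>
    (\<forall>w\<in>A. \<forall>B\<in>C0 p. \<bar>frob_inner p (W2 n k (Z w) (E w)) (\<lambda>a b. Bstar p k a b - B a b)\<bar>
       \<le> 8 * sqrt (ln (real p)) * sqrt (Gamma_sup p k \<gamma>) *
         (\<Sum>j<K. \<Sum>l\<in>{..<K} - {j}. col_dist n (Z w) j l * block_l1 p k B j l))"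
proof -
  define T where "T = 8 * sqrt (ln (real p)) * sqrt (Gamma_sup p k \<gamma>)"
  define Pairs where "Pairs = {ab. fst ab < p \<and> snd ab < p \<and> k (fst ab) \<noteq> k (snd ab)}"
  define Bad where "Bad ab = {w\<in>space M. T * col_dist n (Z w) (k (fst ab)) (k (snd ab))
      < \<bar>W2 n k (Z w) (E w) (fst ab) (snd ab)\<bar>}" for ab
  have Bad_sets: "Bad ab \<in> sets M" and Bad_small: "measure M (Bad ab) \<le> 1 / real p ^ 3"
    if "ab \<in> Pairs" for ab
    using W2_entry_tail[OF p, of "fst ab" "snd ab"] that unfolding Bad_def T_def Pairs_def by auto
  have Pairs_sub: "Pairs \<subseteq> {..<p} \<times> {..<p}" by (auto simp: Pairs_def)
  then have Pairs_fin: "finite Pairs" by (rule finite_subset) auto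
  have Pairs_card: "real (card Pairs) \<le> real (p * p)"
    using card_mono[OF _ Pairs_sub] by (simp only: of_nat_le_iff) simp
  define U where "U = (\<Union>ab\<in>Pairs. Bad ab)"
  have U_sets: "U \<in> sets M" unfolding U_def using Pairs_fin Bad_sets by auto
  have "measure M U \<le> real (card Pairs) * (1 / real p ^ 3)"
    unfolding U_def by (rule measure_UN_le_card_mult[OF Pairs_fin Bad_sets Bad_small])
  also have "\<dots> \<le> real (p * p) * (1 / real p ^ 3)"
    using Pairs_card by (rule mult_right_mono) simp
  also have "\<dots> = 1 / real p" using p by (simp add: power3_eq_cube)
  finally have "1 - 1 / real p \<le> measure M (space M - U)"
    using U_sets by (simp add: prob_compl)
  moreover have "\<bar>frob_inner p (W2 n k (Z w) (E w)) (\<lambda>a b. Bstar p k a b - B a b)\<bar>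
       \<le> T * (\<Sum>j<K. \<Sum>l\<in>{..<K} - {j}. col_dist n (Z w) j l * block_l1 p k B j l)"
    if "w \<in> space M - U" and "B \<in> C0 p" for w B
  proof (rule frob_inner_Bstar_diff_le)
    show "\<bar>W2 n k (Z w) (E w) a b\<bar> \<le> T * col_dist n (Z w) (k a) (k b)"
      if "a < p" "b < p" "k a \<noteq> k b" for a b
    proof -
      have "(a, b) \<in> Pairs" using that by (simp add: Pairs_def)
      then have "w \<notin> Bad (a, b)" using \<open>w \<in> space M - U\<close> by (auto simp: U_def)
      then show ?thesis using \<open>w \<in> space M - U\<close> by (simp add: Bad_def not_less)
    qed
    show "0 \<le> B a b" if "a < p" "b < p" for a b
      using \<open>B \<in> C0 p\<close> that unfolding C0_def by blast
  qed (auto simp: k_less W2_def)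
  ultimately show ?thesis using U_sets unfolding T_def by blast
qed

end

lemma bex_sets_measure_ge_mono:
  "\<exists>A\<in>sets M. a \<le> measure M A \<and> P A \<Longrightarrow> b \<le> a \<Longrightarrow> \<exists>A\<in>sets M. b \<le> measure M A \<and> P A"
  by (auto intro: order_trans)

theorem mainTheorem12:
  "\<exists>c1 c0'. c1 > 0 \<and> c0' > 0 \<and>
    (\<forall>(M :: 'w measure) (p::nat) (K::nat) (n::nat) (k :: nat \<Rightarrow> nat)
       (C :: nat \<Rightarrow> nat \<Rightarrow> real) (\<gamma> :: nat \<Rightarrow> real)
       (Z :: 'w \<Rightarrow> nat \<Rightarrow> nat \<Rightarrow> real) (E :: 'w \<Rightarrow> nat \<Rightarrow> nat \<Rightarrow> real).
      prob_space M \<and> p \<ge> 1 \<and> is_partition_map p K k \<and> (\<forall>j<K. \<gamma> j > 0) \<and>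
      (\<forall>i<n. gaussian_vec M {..<K} C (\<lambda>w. Z w i)) \<and>
      (\<forall>i<n. gaussian_vec M {..<p} (\<lambda>a b. if a = b then \<gamma> (k a) else 0) (\<lambda>w. E w i)) \<and>
      prob_space.indep_vars M
        (\<lambda>t. case t of Inl i \<Rightarrow> PiM {..<K} (\<lambda>_. (borel :: real measure))
                     | Inr i \<Rightarrow> PiM {..<p} (\<lambda>_. (borel :: real measure)))
        (\<lambda>t w. case t of Inl i \<Rightarrow> (\<lambda>j\<in>{..<K}. Z w i j)
                       | Inr i \<Rightarrow> (\<lambda>a\<in>{..<p}. E w i a))
        (Inl ` {..<n} \<union> Inr ` {..<n})
    \<longrightarrow> (\<exists>A \<in> sets M. measure M A \<ge> 1 - c0' / real p \<and>
          (\<forall>w\<in>A. \<forall>B\<in>C0 p.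
             \<bar>frob_inner p (W2 n k (Z w) (E w)) (\<lambda>a b. Bstar p k a b - B a b)\<bar>
             \<le> c1 * sqrt (ln (real p)) * sqrt (Gamma_sup p k \<gamma>) *
               (\<Sum>j<K. \<Sum>l\<in>{..<K} - {j}. col_dist n (Z w) j l * block_l1 p k B j l))))"
proof (rule exI[of _ "8::real"], rule exI[of _ "3::real"], intro conjI allI impI, goal_cases)
  case (3 M p K n k C \<gamma> Z E)
  then have p: "p \<ge> 1" by blast
  from 3 have model: "latent_noise_model M p K n k \<gamma> Z E"
    unfolding latent_noise_model_def latent_noise_model_axioms_def is_partition_map_def
      latent_row_space_def latent_row_def
    by blast
  show ?case
  proof (cases "p \<ge> 4")
    case True
    have "1 - 3 / real p \<le> 1 - 1 / real p" using p by (simp add: divide_right_mono)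
    with latent_noise_model.W2_bound_whp[OF model True] show ?thesis
      by (rule bex_sets_measure_ge_mono)
  next
    case False
    then have "1 \<le> 3 / real p" using p by (subst le_divide_eq_1_pos) auto
    then show ?thesis by (intro bexI[of _ "{}"] conjI ballI) simp_all
  qed
qed simp_all

end
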